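(* Let $\mathbb{R}$ be the real line with the distance $d(x,y)=|x-y|$, and let $\mathcal C\subseteq\mathrm{age}(\mathbb{R})$ be an ideal. Then $\mathcal C$ has the $2$-amalgamation property if and only if there is a homogeneous metric space $\mathbb D$ with $\mathrm{age}(\mathbb D)=\mathcal C$. Moreover, if $\mathcal C$ contains at least one $3$-element metric space, then such a $\mathbb D$ can be taken to be $(G,d_{\restriction G})$ where $G$ is an additive subgroup of $\mathbb{R}$ and $d_{\restriction G}$ is the restriction of $d$.
   Context: Finite metric spaces are considered up to isometry and ordered by isometric embeddability; the age of a metric space is the set of isometry types of its finite subspaces; an ideal is a non-empty, downward closed, up-directed set of such isometry types. $\mathcal C$ has the $2$-amalgamation property if for all isometric embeddings $f_1:\mathbb A\to\mathbb A_1$, $f_2:\mathbb A\to\mathbb A_2$ between finite metric spaces with isometry types in $\mathcal C$ and $|\mathbb A|\le 2$, there exist a finite metric space $\mathbb B$ with type in $\mathcal C$ and isometric embeddings $g_1:\mathbb A_1\to\mathbb B$, $g_2:\mathbb A_2\to\mathbb B$ with $g_1\circ f_1=g_2\circ f_2$. A metric space $\mathbb D$ is homogeneous if every isometry between finite subspaces of $\mathbb D$ extends to an isometry of $\mathbb D$ onto itself. *)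

theory Defs
  imports Main "HOL-Analysis.Analysis"
begin

definition metric_on :: "'a set \<Rightarrow> ('a \<Rightarrow> 'a \<Rightarrow> real) \<Rightarrow> bool" where
  "metric_on M d \<longleftrightarrow>
     (\<forall>x\<in>M. \<forall>y\<in>M. 0 \<le> d x y \<and> d x y = d y x \<and> (d x y = 0 \<longleftrightarrow> x = y)) \<and>
     (\<forall>x\<in>M. \<forall>y\<in>M. \<forall>z\<in>M. d x z \<le> d x y + d y z)"

text \<open>Representatives of isometry types of finite metric spaces: finite metric
  spaces whose carrier is a set of natural numbers.\<close>
type_synonym fms = "nat set \<times> (nat \<Rightarrow> nat \<Rightarrow> real)"

definition fin_mspace :: "fms \<Rightarrow> bool" where
  "fin_mspace X \<longleftrightarrow> finite (fst X) \<and> metric_on (fst X) (snd X)"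

definition isom_emb :: "('a \<Rightarrow> 'b) \<Rightarrow> 'a set \<Rightarrow> ('a \<Rightarrow> 'a \<Rightarrow> real)
    \<Rightarrow> 'b set \<Rightarrow> ('b \<Rightarrow> 'b \<Rightarrow> real) \<Rightarrow> bool" where
  "isom_emb f A d B e \<longleftrightarrow> f ` A \<subseteq> B \<and> (\<forall>x\<in>A. \<forall>y\<in>A. e (f x) (f y) = d x y)"

definition isometry :: "('a \<Rightarrow> 'b) \<Rightarrow> 'a set \<Rightarrow> ('a \<Rightarrow> 'a \<Rightarrow> real)
    \<Rightarrow> 'b set \<Rightarrow> ('b \<Rightarrow> 'b \<Rightarrow> real) \<Rightarrow> bool" where
  "isometry f A d B e \<longleftrightarrow> bij_betw f A B \<and> (\<forall>x\<in>A. \<forall>y\<in>A. e (f x) (f y) = d x y)"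

definition embeds :: "fms \<Rightarrow> fms \<Rightarrow> bool" where
  "embeds X Y \<longleftrightarrow> (\<exists>f. isom_emb f (fst X) (snd X) (fst Y) (snd Y))"

definition age :: "'a set \<Rightarrow> ('a \<Rightarrow> 'a \<Rightarrow> real) \<Rightarrow> fms set" where
  "age M d = {X. fin_mspace X \<and>
      (\<exists>S. S \<subseteq> M \<and> finite S \<and> (\<exists>f. isometry f (fst X) (snd X) S d))}"

text \<open>An ideal: non-empty, downward closed, up-directed.  Downward closure
  also makes the class closed under isometry, so it is a set of isometry types.\<close>
definition ideal_fms :: "fms set \<Rightarrow> bool" where
  "ideal_fms C \<longleftrightarrow> C \<noteq> {} \<and> (\<forall>X\<in>C. fin_mspace X) \<and>
     (\<forall>X\<in>C. \<forall>Y. fin_mspace Y \<and> embeds Y X \<longrightarrow> Y \<in> C) \<and>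
     (\<forall>X\<in>C. \<forall>Y\<in>C. \<exists>Z\<in>C. embeds X Z \<and> embeds Y Z)"

definition amalg2 :: "fms set \<Rightarrow> bool" where
  "amalg2 C \<longleftrightarrow>
    (\<forall>A\<in>C. \<forall>A1\<in>C. \<forall>A2\<in>C. \<forall>f1 f2.
       card (fst A) \<le> 2 \<and>
       isom_emb f1 (fst A) (snd A) (fst A1) (snd A1) \<and>
       isom_emb f2 (fst A) (snd A) (fst A2) (snd A2) \<longrightarrow>
       (\<exists>B\<in>C. \<exists>g1 g2.
          isom_emb g1 (fst A1) (snd A1) (fst B) (snd B) \<and>
          isom_emb g2 (fst A2) (snd A2) (fst B) (snd B) \<and>
          (\<forall>x\<in>fst A. g1 (f1 x) = g2 (f2 x))))"

definition homogeneous :: "'a set \<Rightarrow> ('a \<Rightarrow> 'a \<Rightarrow> real) \<Rightarrow> bool" where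
  "homogeneous M d \<longleftrightarrow> metric_on M d \<and>
     (\<forall>S T h. S \<subseteq> M \<and> T \<subseteq> M \<and> finite S \<and> finite T \<and> isometry h S d T d \<longrightarrow>
        (\<exists>g. isometry g M d M d \<and> (\<forall>x\<in>S. g x = h x)))"

definition dR :: "real \<Rightarrow> real \<Rightarrow> real" where
  "dR x y = \<bar>x - y\<bar>"

definition additive_subgroup :: "real set \<Rightarrow> bool" where
  "additive_subgroup G \<longleftrightarrow> 0 \<in> G \<and> (\<forall>x\<in>G. \<forall>y\<in>G. x + y \<in> G) \<and> (\<forall>x\<in>G. - x \<in> G)"

end

theory Submission
  imports Defs
begin

text \<open>
  If D is homogeneous, any two copies of a finite space inside D are conjugate by an
  automorphism of D; moving one amalgamand along such an automorphism so that it meets the other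
  in the common part places the amalgam inside D.

  Conversely, let C be an ideal of finite subspaces of the real line with 2-amalgamation.
  Distance-preserving maps between subsets of the line are rigid motions x \<mapsto> \<plusminus>x + c.
  Amalgamating a finite set W realizing a member of C with its mirror image p + q - W over the
  pair {p, q} therefore forces the two motions to agree on two points, hence to coincide, so
  W \<union> (p + q - W) realizes a member of C as well. Two such reflections through a third point
  translate W by any difference of two points of a realized set. If C contains a three-point
  space, the translations t keeping W \<union> (W + t) realized for all realized W of at least three
  points form an additive subgroup G whose age is C, and G is homogeneous because the motions
  x \<mapsto> \<plusminus>x + c with c \<in> G map G onto itself. Otherwise all members of C have at most two
  points, and a realized set of maximal size is itself homogeneous with age C.
\<close>

section \<open>Finite metric spaces and ideals\<close>

lemma metric_on_subset:
  assumes "metric_on M d" "N \<subseteq> M"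
  shows "metric_on N d"
  unfolding metric_on_def
proof (intro conjI ballI)
  fix x y assume "x \<in> N" "y \<in> N"
  then have "x \<in> M" "y \<in> M" using assms(2) by auto
  then show "0 \<le> d x y" "d x y = d y x" "d x y = 0 \<longleftrightarrow> x = y"
    using assms(1) unfolding metric_on_def by simp_all
next
  fix x y z assume "x \<in> N" "y \<in> N" "z \<in> N"
  then have "x \<in> M" "y \<in> M" "z \<in> M" using assms(2) by auto
  then show "d x z \<le> d x y + d y z" using assms(1) unfolding metric_on_def by simp
qed

lemma metric_on_pullback:
  assumes "metric_on M d" "inj_on \<sigma> N" "\<sigma> ` N \<subseteq> M"
  shows "metric_on N (\<lambda>i j. d (\<sigma> i) (\<sigma> j))"
  unfolding metric_on_def
proof (intro conjI ballI)
  fix x y assume "x \<in> N" "y \<in> N"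
  then have "\<sigma> x \<in> M" "\<sigma> y \<in> M" "\<sigma> x = \<sigma> y \<longleftrightarrow> x = y"
    using assms(2,3) by (auto simp: inj_on_eq_iff)
  then show "0 \<le> d (\<sigma> x) (\<sigma> y)" "d (\<sigma> x) (\<sigma> y) = d (\<sigma> y) (\<sigma> x)"
    "d (\<sigma> x) (\<sigma> y) = 0 \<longleftrightarrow> x = y"
    using assms(1) unfolding metric_on_def by simp_all
next
  fix x y z assume "x \<in> N" "y \<in> N" "z \<in> N"
  then have "\<sigma> x \<in> M" "\<sigma> y \<in> M" "\<sigma> z \<in> M" using assms(3) by auto
  then show "d (\<sigma> x) (\<sigma> z) \<le> d (\<sigma> x) (\<sigma> y) + d (\<sigma> y) (\<sigma> z)"
    using assms(1) unfolding metric_on_def by simp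
qed

lemma metric_on_zero_iff: "metric_on M d \<Longrightarrow> x \<in> M \<Longrightarrow> y \<in> M \<Longrightarrow> d x y = 0 \<longleftrightarrow> x = y"
  unfolding metric_on_def by simp

lemma metric_on_sym: "metric_on M d \<Longrightarrow> x \<in> M \<Longrightarrow> y \<in> M \<Longrightarrow> d x y = d y x"
  unfolding metric_on_def by simp

lemma isom_emb_inj_on:
  assumes "metric_on A d" "isom_emb f A d B e"
  shows "inj_on f A"
proof (rule inj_onI)
  fix x y assume xy: "x \<in> A" "y \<in> A" "f x = f y"
  have "d x y = e (f x) (f y)" using assms(2) xy(1,2) by (simp add: isom_emb_def)
  also have "\<dots> = e (f x) (f x)" using xy(3) by simp
  also have "\<dots> = d x x" using assms(2) xy(1) by (simp add: isom_emb_def)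
  also have "\<dots> = 0" using metric_on_zero_iff[OF assms(1) xy(1,1)] by simp
  finally show "x = y" using metric_on_zero_iff[OF assms(1) xy(1,2)] by simp
qed

lemma isom_emb_comp:
  "isom_emb f A d B e \<Longrightarrow> isom_emb g B e C k \<Longrightarrow> isom_emb (\<lambda>x. g (f x)) A d C k"
  unfolding isom_emb_def by (simp add: image_subset_iff)

lemma isom_emb_mono: "isom_emb f A d B e \<Longrightarrow> B \<subseteq> B' \<Longrightarrow> isom_emb f A d B' e"
  unfolding isom_emb_def by blast

lemma isometry_image: "isometry f A d B e \<Longrightarrow> f ` A = B"
  unfolding isometry_def bij_betw_def by simp

lemma isometry_card_eq: "isometry f A d B e \<Longrightarrow> card B = card A"
  unfolding isometry_def by (metis bij_betw_same_card)

lemma isom_emb_if_isometry: "isometry f A d B e \<Longrightarrow> isom_emb f A d B e"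
  unfolding isometry_def isom_emb_def bij_betw_def by simp

lemma isometry_inv_into:
  assumes "isometry f A d B e"
  shows "isometry (inv_into A f) B e A d"
proof -
  have bij: "bij_betw f A B" using assms by (simp add: isometry_def)
  then have "bij_betw (inv_into A f) B A" by (rule bij_betw_inv_into)
  moreover have "d (inv_into A f x) (inv_into A f y) = e x y" if "x \<in> B" "y \<in> B" for x y
  proof -
    have "inv_into A f x \<in> A" "inv_into A f y \<in> A" "f (inv_into A f x) = x" "f (inv_into A f y) = y"
      using bij that by (auto simp: bij_betw_def inv_into_into f_inv_into_f)
    then show ?thesis using assms unfolding isometry_def by metis
  qed
  ultimately show ?thesis unfolding isometry_def by blast
qed

lemma isometry_restrict:
  assumes "isometry f A d B e" "V \<subseteq> B"
  shows "isometry f (A \<inter> f -` V) d V e"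
proof -
  have bij: "bij_betw f A B" using assms(1) by (simp add: isometry_def)
  then have "f ` (A \<inter> f -` V) = V" using assms(2) unfolding bij_betw_def by auto
  then have "bij_betw f (A \<inter> f -` V) V" using bij_betw_subset[OF bij] by simp
  then show ?thesis using assms(1) unfolding isometry_def by simp
qed

lemma fms_of_finite_subset:
  assumes "metric_on M e" "T \<subseteq> M" "finite T"
  obtains Y \<nu> where "fin_mspace Y" "isometry \<nu> (fst Y) (snd Y) T e"
proof -
  obtain \<nu> where \<nu>: "bij_betw \<nu> {0..<card T} T"
    using ex_bij_betw_nat_finite[OF assms(3)] by blast
  let ?Y = "({0..<card T}, \<lambda>i j. e (\<nu> i) (\<nu> j))"
  have "metric_on {0..<card T} (\<lambda>i j. e (\<nu> i) (\<nu> j))"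
    using metric_on_pullback[OF metric_on_subset[OF assms(1,2)]] \<nu> unfolding bij_betw_def by blast
  then have "fin_mspace ?Y" by (simp add: fin_mspace_def)
  moreover have "isometry \<nu> (fst ?Y) (snd ?Y) T e" using \<nu> by (simp add: isometry_def)
  ultimately show thesis by (rule that)
qed

lemma ageE:
  assumes "X \<in> age M e"
  obtains S f where "fin_mspace X" "S \<subseteq> M" "finite S" "isometry f (fst X) (snd X) S e"
  using assms unfolding age_def by blast

lemma homogeneousE:
  assumes "homogeneous D e" "S \<subseteq> D" "T \<subseteq> D" "finite S" "finite T" "isometry h S e T e"
  obtains g where "isometry g D e D e" "\<And>x. x \<in> S \<Longrightarrow> g x = h x"
proof -
  have "\<exists>g. isometry g D e D e \<and> (\<forall>x\<in>S. g x = h x)"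
    using assms unfolding homogeneous_def by simp
  then show thesis using that by blast
qed

lemma amalg2E:
  assumes "amalg2 C" "A \<in> C" "A1 \<in> C" "A2 \<in> C" "card (fst A) \<le> 2"
    "isom_emb f1 (fst A) (snd A) (fst A1) (snd A1)" "isom_emb f2 (fst A) (snd A) (fst A2) (snd A2)"
  obtains B g1 g2 where "B \<in> C" "isom_emb g1 (fst A1) (snd A1) (fst B) (snd B)"
    "isom_emb g2 (fst A2) (snd A2) (fst B) (snd B)" "\<And>x. x \<in> fst A \<Longrightarrow> g1 (f1 x) = g2 (f2 x)"
  using assms(1)[unfolded amalg2_def, rule_format, OF assms(2-4) conjI[OF assms(5) conjI[OF assms(6,7)]]]
  by blast

lemma ideal_fms_fin_mspace: "ideal_fms C \<Longrightarrow> X \<in> C \<Longrightarrow> fin_mspace X"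
  unfolding ideal_fms_def by blast

lemma ideal_fms_downward: "ideal_fms C \<Longrightarrow> X \<in> C \<Longrightarrow> fin_mspace Y \<Longrightarrow> embeds Y X \<Longrightarrow> Y \<in> C"
  unfolding ideal_fms_def by blast

lemma ideal_fms_restrict:
  assumes "ideal_fms C" "X \<in> C" "N \<subseteq> fst X"
  shows "(N, snd X) \<in> C"
proof -
  have "fin_mspace X" using assms(1,2) by (rule ideal_fms_fin_mspace)
  then have "fin_mspace (N, snd X)"
    using assms(3) metric_on_subset[of "fst X" "snd X" N] finite_subset[of N "fst X"]
    unfolding fin_mspace_def by simp
  moreover have "embeds (N, snd X) X" using assms(3) unfolding embeds_def isom_emb_def by auto
  ultimately show ?thesis using assms(1,2) ideal_fms_downward by blast
qed

lemma ideal_fms_mem_if_isometric_subspace: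
  assumes "ideal_fms C" "X \<in> C" "fin_mspace Y"
    and "isometry f (fst Y) (snd Y) S e" "isometry g (fst X) (snd X) T e" "S \<subseteq> T"
  shows "Y \<in> C"
proof -
  have "isom_emb f (fst Y) (snd Y) T e" using isom_emb_if_isometry[OF assms(4)] assms(6) by (rule isom_emb_mono)
  then have "embeds Y X"
    using isom_emb_comp isom_emb_if_isometry[OF isometry_inv_into[OF assms(5)]] unfolding embeds_def by blast
  then show ?thesis using assms(1-3) ideal_fms_downward by blast
qed

text \<open>The argument works with copies of members of C inside the ambient space rather than
  with their codes in fms.\<close>
definition realizes :: "fms set \<Rightarrow> ('a \<Rightarrow> 'a \<Rightarrow> real) \<Rightarrow> 'a set \<Rightarrow> bool" where
  "realizes C e W \<longleftrightarrow> finite W \<and> (\<exists>X\<in>C. \<exists>f. isometry f (fst X) (snd X) W e)"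

lemma realizes_subset:
  assumes "ideal_fms C" "realizes C e W" "V \<subseteq> W"
  shows "realizes C e V"
proof -
  obtain X f where X: "X \<in> C" "isometry f (fst X) (snd X) W e" and "finite W"
    using assms(2) by (auto simp: realizes_def)
  have "isometry f (fst (fst X \<inter> f -` V, snd X)) (snd (fst X \<inter> f -` V, snd X)) V e"
    using isometry_restrict[OF X(2) assms(3)] by simp
  moreover have "(fst X \<inter> f -` V, snd X) \<in> C" using ideal_fms_restrict[OF assms(1) X(1)] by simp
  moreover have "finite V" using \<open>finite W\<close> assms(3) by (rule finite_subset[rotated])
  ultimately show ?thesis unfolding realizes_def by blast
qed

lemma age_subset_if_finite_subsets_realize:
  assumes "ideal_fms C" "\<And>T. T \<subseteq> M \<Longrightarrow> finite T \<Longrightarrow> realizes C e T"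
  shows "age M e \<subseteq> C"
proof
  fix Y assume "Y \<in> age M e"
  then obtain S g where Y: "fin_mspace Y" "S \<subseteq> M" "finite S" "isometry g (fst Y) (snd Y) S e"
    by (rule ageE)
  then obtain X f where "X \<in> C" "isometry f (fst X) (snd X) S e"
    using assms(2) unfolding realizes_def by blast
  then show "Y \<in> C" using ideal_fms_mem_if_isometric_subspace[OF assms(1) _ Y(1,4)] by blast
qed

lemma amalg2_copies:
  assumes I: "ideal_fms C" and am: "amalg2 C"
    and X1: "X1 \<in> C" "isometry f1 (fst X1) (snd X1) W1 e"
    and X2: "X2 \<in> C" "isometry f2 (fst X2) (snd X2) W2 e"
    and P: "P \<subseteq> W1 \<inter> W2" "card P \<le> 2"
  obtains B h1 h2 where "B \<in> C" "isom_emb h1 W1 e (fst B) (snd B)" "isom_emb h2 W2 e (fst B) (snd B)"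
    "\<And>z. z \<in> P \<Longrightarrow> h1 z = h2 z"
proof -
  define A where "A = (fst X1 \<inter> f1 -` P, snd X1)"
  have "A \<in> C" unfolding A_def by (rule ideal_fms_restrict[OF I X1(1)]) blast
  have fA: "isometry f1 (fst A) (snd A) P e" unfolding A_def using isometry_restrict[OF X1(2)] P(1) by simp
  then have "card (fst A) \<le> 2" using isometry_card_eq P(2) by metis
  have k1: "isom_emb id (fst A) (snd A) (fst X1) (snd X1)" unfolding A_def isom_emb_def by auto
  have "isom_emb f1 (fst A) (snd A) W2 e" using isom_emb_mono[OF isom_emb_if_isometry[OF fA]] P(1) by blast
  then have k2: "isom_emb (\<lambda>x. inv_into (fst X2) f2 (f1 x)) (fst A) (snd A) (fst X2) (snd X2)"
    using isom_emb_comp isom_emb_if_isometry[OF isometry_inv_into[OF X2(2)]] by blast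
  obtain B g1 g2 where B: "B \<in> C" "isom_emb g1 (fst X1) (snd X1) (fst B) (snd B)"
      "isom_emb g2 (fst X2) (snd X2) (fst B) (snd B)"
    and g12: "\<And>x. x \<in> fst A \<Longrightarrow> g1 (id x) = g2 (inv_into (fst X2) f2 (f1 x))"
    using amalg2E[OF am \<open>A \<in> C\<close> X1(1) X2(1) \<open>card (fst A) \<le> 2\<close> k1 k2] by metis
  have "g1 (inv_into (fst X1) f1 z) = g2 (inv_into (fst X2) f2 z)" if z: "z \<in> P" for z
  proof -
    obtain x where x: "x \<in> fst A" "z = f1 x" using isometry_image[OF fA] z by blast
    then have "inv_into (fst X1) f1 z = x"
      using X1(2) unfolding A_def isometry_def bij_betw_def by (simp add: inv_into_f_f)
    then show ?thesis using g12[OF x(1)] x(2) by simp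
  qed
  moreover have "isom_emb (\<lambda>z. g1 (inv_into (fst X1) f1 z)) W1 e (fst B) (snd B)"
    using isom_emb_comp[OF isom_emb_if_isometry[OF isometry_inv_into[OF X1(2)]] B(2)] .
  moreover have "isom_emb (\<lambda>z. g2 (inv_into (fst X2) f2 z)) W2 e (fst B) (snd B)"
    using isom_emb_comp[OF isom_emb_if_isometry[OF isometry_inv_into[OF X2(2)]] B(3)] .
  ultimately show thesis using that[OF B(1)] by blast
qed

section \<open>Ages of homogeneous spaces\<close>

lemma homogeneous_isom_embs_conjugate:
  assumes hom: "homogeneous D e" and A: "metric_on A d" "finite A"
    and u: "isom_emb u A d D e" and v: "isom_emb v A d D e"
  obtains g where "isometry g D e D e" "\<And>x. x \<in> A \<Longrightarrow> g (u x) = v x"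
proof -
  have inj: "inj_on u A" "inj_on v A" using isom_emb_inj_on[OF A(1)] u v by blast+
  then have "bij_betw (inv_into A u) (u ` A) A" "bij_betw v A (v ` A)"
    by (simp_all add: bij_betw_inv_into inj_on_imp_bij_betw)
  then have "bij_betw (\<lambda>z. v (inv_into A u z)) (u ` A) (v ` A)"
    using bij_betw_trans unfolding comp_def by blast
  moreover have "e (v (inv_into A u a)) (v (inv_into A u b)) = e a b" if ab: "a \<in> u ` A" "b \<in> u ` A" for a b
  proof -
    obtain x y where "x \<in> A" "y \<in> A" "a = u x" "b = u y" using ab by blast
    then show ?thesis using u v inv_into_f_f[OF inj(1)] unfolding isom_emb_def by simp
  qed
  ultimately have "isometry (\<lambda>z. v (inv_into A u z)) (u ` A) e (v ` A) e" unfolding isometry_def by blast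
  moreover have "u ` A \<subseteq> D" "v ` A \<subseteq> D" using u v unfolding isom_emb_def by simp_all
  ultimately obtain g where "isometry g D e D e" "\<And>z. z \<in> u ` A \<Longrightarrow> g z = v (inv_into A u z)"
    using homogeneousE[OF hom] A(2) by (metis finite_imageI)
  then show thesis using that inv_into_f_f[OF inj(1)] by simp
qed

lemma amalg2_age_if_homogeneous:
  assumes hom: "homogeneous D e"
  shows "amalg2 (age D e)"
  unfolding amalg2_def
proof (intro ballI allI impI)
  fix A A1 A2 f1 f2
  assume "A \<in> age D e" "A1 \<in> age D e" "A2 \<in> age D e"
    and "card (fst A) \<le> 2 \<and> isom_emb f1 (fst A) (snd A) (fst A1) (snd A1)
      \<and> isom_emb f2 (fst A) (snd A) (fst A2) (snd A2)"
  then have A: "fin_mspace A" and f1: "isom_emb f1 (fst A) (snd A) (fst A1) (snd A1)"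
    and f2: "isom_emb f2 (fst A) (snd A) (fst A2) (snd A2)" by (auto elim: ageE)
  obtain S1 \<phi>1 where S1: "S1 \<subseteq> D" "finite S1" "isometry \<phi>1 (fst A1) (snd A1) S1 e"
    using \<open>A1 \<in> age D e\<close> by (rule ageE)
  obtain S2 \<phi>2 where S2: "S2 \<subseteq> D" "finite S2" "isometry \<phi>2 (fst A2) (snd A2) S2 e"
    using \<open>A2 \<in> age D e\<close> by (rule ageE)
  have \<phi>1: "isom_emb \<phi>1 (fst A1) (snd A1) D e" and \<phi>2: "isom_emb \<phi>2 (fst A2) (snd A2) D e"
    using isom_emb_mono[OF isom_emb_if_isometry] S1 S2 by blast+
  obtain g where g: "isometry g D e D e" and gu: "\<And>x. x \<in> fst A \<Longrightarrow> g (\<phi>2 (f2 x)) = \<phi>1 (f1 x)"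
    using homogeneous_isom_embs_conjugate[OF hom _ _ isom_emb_comp[OF f2 \<phi>2] isom_emb_comp[OF f1 \<phi>1]] A
    unfolding fin_mspace_def by blast
  define T where "T = S1 \<union> g ` S2"
  have "g ` S2 \<subseteq> D" using isometry_image[OF g] S2(1) by blast
  then have T: "T \<subseteq> D" "finite T" using S1(1,2) S2(2) unfolding T_def by auto
  have "metric_on D e" using hom by (simp add: homogeneous_def)
  then obtain B \<nu> where B: "fin_mspace B" "isometry \<nu> (fst B) (snd B) T e"
    using fms_of_finite_subset T by blast
  then have "B \<in> age D e" using T unfolding age_def by blast
  have \<nu>: "isom_emb (inv_into (fst B) \<nu>) T e (fst B) (snd B)"
    by (rule isom_emb_if_isometry[OF isometry_inv_into[OF B(2)]])
  have "isom_emb \<phi>1 (fst A1) (snd A1) T e"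
    using isom_emb_if_isometry[OF S1(3)] by (rule isom_emb_mono) (simp add: T_def)
  moreover have "(\<lambda>x. g (\<phi>2 x)) ` fst A2 \<subseteq> T" using isometry_image[OF S2(3)] unfolding T_def by auto
  then have "isom_emb (\<lambda>x. g (\<phi>2 x)) (fst A2) (snd A2) T e"
    using isom_emb_comp[OF \<phi>2 isom_emb_if_isometry[OF g]] unfolding isom_emb_def by simp
  ultimately have "isom_emb (\<lambda>x. inv_into (fst B) \<nu> (\<phi>1 x)) (fst A1) (snd A1) (fst B) (snd B)"
    "isom_emb (\<lambda>x. inv_into (fst B) \<nu> (g (\<phi>2 x))) (fst A2) (snd A2) (fst B) (snd B)"
    using isom_emb_comp \<nu> by blast+
  moreover have "\<forall>x\<in>fst A. inv_into (fst B) \<nu> (\<phi>1 (f1 x)) = inv_into (fst B) \<nu> (g (\<phi>2 (f2 x)))"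
    using gu by simp
  ultimately show "\<exists>B\<in>age D e. \<exists>g1 g2. isom_emb g1 (fst A1) (snd A1) (fst B) (snd B)
      \<and> isom_emb g2 (fst A2) (snd A2) (fst B) (snd B) \<and> (\<forall>x\<in>fst A. g1 (f1 x) = g2 (f2 x))"
    using \<open>B \<in> age D e\<close> by blast
qed

section \<open>Rigid motions of the real line\<close>

lemma metric_on_dR: "metric_on S dR"
  unfolding metric_on_def dR_def by auto

lemma dist_preserving_real_affine:
  assumes "\<forall>x\<in>S. \<forall>y\<in>S. dR (f x) (f y) = dR x y"
  obtains e c where "e = 1 \<or> e = -1" "\<And>x. x \<in> S \<Longrightarrow> f x = e * x + c"
proof (cases "\<exists>a\<in>S. \<exists>b\<in>S. a \<noteq> b")
  case False
  show thesis
  proof (cases "S = {}")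
    case True
    then show thesis using that[of 1 0] by simp
  next
    case nonempty: False
    then obtain a where "a \<in> S" by blast
    with False have "x = a" if x: "x \<in> S" for x using x by blast
    then show thesis using that[of 1 "f a - a"] by simp
  qed
next
  case True
  then obtain a b where ab: "a \<in> S" "b \<in> S" "a \<noteq> b" by blast
  have "\<bar>f b - f a\<bar> = \<bar>b - a\<bar>" using assms ab unfolding dR_def by blast
  then have "f b - f a = 1 * (b - a) \<or> f b - f a = -1 * (b - a)" by (auto simp: abs_eq_iff)
  then obtain e where e: "e = 1 \<or> e = -1" "f b - f a = e * (b - a)" by blast
  have "f x = e * x + (f a - e * a)" if x: "x \<in> S" for x
  proof -
    have "\<bar>f x - f a\<bar> = \<bar>x - a\<bar>" "\<bar>f x - f b\<bar> = \<bar>x - b\<bar>"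
      using assms x ab unfolding dR_def by blast+
    with e(2) ab(3) show ?thesis using e(1) by (elim disjE) (auto simp: abs_if split: if_splits)
  qed
  then show thesis using that e(1) by blast
qed

lemma isometry_motion:
  assumes "isometry f A d S dR" "e = 1 \<or> e = -1"
  shows "isometry (\<lambda>x. e * f x + c) A d ((\<lambda>x. e * x + c) ` S) dR"
proof -
  have "inj_on (\<lambda>x. e * x + c) S" using assms(2) by (auto simp: inj_on_def)
  then have "bij_betw (\<lambda>x. e * x + c) S ((\<lambda>x. e * x + c) ` S)" by (simp add: inj_on_imp_bij_betw)
  then have "bij_betw (\<lambda>x. e * f x + c) A ((\<lambda>x. e * x + c) ` S)"
    using assms(1) bij_betw_trans unfolding isometry_def comp_def by blast
  moreover have "dR (e * f x + c) (e * f y + c) = dR (f x) (f y)" for x y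
    using assms(2) unfolding dR_def by (auto simp: abs_minus_commute)
  ultimately show ?thesis using assms(1) unfolding isometry_def by simp
qed

lemma realizes_motion_image:
  assumes "realizes C dR W" "e = 1 \<or> e = -1"
  shows "realizes C dR ((\<lambda>x. e * x + c) ` W)"
proof -
  obtain X f where "X \<in> C" "isometry f (fst X) (snd X) W dR" "finite W"
    using assms(1) unfolding realizes_def by blast
  then show ?thesis using isometry_motion[OF _ assms(2)] unfolding realizes_def by blast
qed

lemma realizes_if_motion_into:
  assumes "ideal_fms C" "realizes C dR W" "e = 1 \<or> e = -1" "(\<lambda>x. e * x + c) ` V \<subseteq> W"
  shows "realizes C dR V"
proof -
  have "V \<subseteq> (\<lambda>y. e * y + (- e * c)) ` W"
  proof
    fix v assume "v \<in> V"
    then have "e * v + c \<in> W" using assms(4) by auto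
    moreover have "v = e * (e * v + c) + (- e * c)" using assms(3) by auto
    ultimately show "v \<in> (\<lambda>y. e * y + (- e * c)) ` W" by (rule rev_image_eqI)
  qed
  then show ?thesis using realizes_subset[OF assms(1) realizes_motion_image[OF assms(2,3)]] by blast
qed

lemma mem_age_if_motion_into:
  assumes "fin_mspace X" "isometry f (fst X) (snd X) W dR" "e = 1 \<or> e = -1"
    and "(\<lambda>x. e * x + c) ` W \<subseteq> M"
  shows "X \<in> age M dR"
proof -
  have "finite ((\<lambda>x. e * x + c) ` W)"
    using assms(1) isometry_image[OF assms(2)] unfolding fin_mspace_def by blast
  then show ?thesis using assms(1,4) isometry_motion[OF assms(2,3)] unfolding age_def by blast
qed

lemma realizes_if_mem_age:
  assumes "C \<subseteq> age (UNIV :: real set) dR" "X \<in> C"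
  obtains W f where "realizes C dR W" "isometry f (fst X) (snd X) W dR"
proof -
  have "X \<in> age UNIV dR" using assms by blast
  then obtain W f where "finite W" "isometry f (fst X) (snd X) W dR" by (auto elim: ageE)
  then show thesis using that assms(2) unfolding realizes_def by blast
qed

lemma isom_emb_real_is_motion:
  assumes "isom_emb f W dR S dR"
  obtains e c where "e = 1 \<or> e = -1" "\<And>x. x \<in> W \<Longrightarrow> f x = e * x + c" "(\<lambda>x. e * x + c) ` W \<subseteq> S"
proof -
  obtain e c where ec: "e = 1 \<or> e = -1" "\<And>x. x \<in> W \<Longrightarrow> f x = e * x + c"
    using dist_preserving_real_affine assms unfolding isom_emb_def by metis
  moreover have "(\<lambda>x. e * x + c) ` W \<subseteq> S" using assms ec(2) unfolding isom_emb_def by auto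
  ultimately show thesis by (rule that)
qed

lemma realizes_amalgamation:
  assumes I: "ideal_fms C" and R: "C \<subseteq> age (UNIV :: real set) dR" and am: "amalg2 C"
    and W1: "realizes C dR W1" and W2: "realizes C dR W2"
    and P: "P \<subseteq> W1 \<inter> W2" "card P \<le> 2"
  obtains W3 e1 c1 e2 c2 where "realizes C dR W3" "e1 = 1 \<or> e1 = -1" "e2 = 1 \<or> e2 = -1"
    "(\<lambda>x. e1 * x + c1) ` W1 \<subseteq> W3" "(\<lambda>x. e2 * x + c2) ` W2 \<subseteq> W3"
    "\<And>z. z \<in> P \<Longrightarrow> e1 * z + c1 = e2 * z + c2"
proof -
  obtain X1 f1 where X1: "X1 \<in> C" "isometry f1 (fst X1) (snd X1) W1 dR"
    using W1 unfolding realizes_def by blast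
  obtain X2 f2 where X2: "X2 \<in> C" "isometry f2 (fst X2) (snd X2) W2 dR"
    using W2 unfolding realizes_def by blast
  obtain B h1 h2 where B: "B \<in> C" "isom_emb h1 W1 dR (fst B) (snd B)" "isom_emb h2 W2 dR (fst B) (snd B)"
    and h12: "\<And>z. z \<in> P \<Longrightarrow> h1 z = h2 z"
    using amalg2_copies[OF I am X1 X2 P] by metis
  obtain S fB where S: "realizes C dR S" "isometry fB (fst B) (snd B) S dR"
    by (rule realizes_if_mem_age[OF R B(1)])
  obtain e1 c1 where \<psi>1: "e1 = 1 \<or> e1 = -1" "\<And>x. x \<in> W1 \<Longrightarrow> fB (h1 x) = e1 * x + c1"
      "(\<lambda>x. e1 * x + c1) ` W1 \<subseteq> S"
    using isom_emb_real_is_motion[OF isom_emb_comp[OF B(2) isom_emb_if_isometry[OF S(2)]]] by metis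
  obtain e2 c2 where \<psi>2: "e2 = 1 \<or> e2 = -1" "\<And>x. x \<in> W2 \<Longrightarrow> fB (h2 x) = e2 * x + c2"
      "(\<lambda>x. e2 * x + c2) ` W2 \<subseteq> S"
    using isom_emb_real_is_motion[OF isom_emb_comp[OF B(3) isom_emb_if_isometry[OF S(2)]]] by metis
  have "e1 * z + c1 = e2 * z + c2" if "z \<in> P" for z
    using \<psi>1(2) \<psi>2(2) h12 P(1) that by force
  then show thesis using that[OF S(1) \<psi>1(1) \<psi>2(1) \<psi>1(3) \<psi>2(3)] by blast
qed

lemma motions_eq_if_agree_on_two_points:
  fixes e1 c1 e2 c2 p q :: real
  assumes "e1 * p + c1 = e2 * p + c2" "e1 * q + c1 = e2 * q + c2" "p \<noteq> q"
  shows "e1 = e2" "c1 = c2"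
proof -
  have "(e1 - e2) * (p - q) = 0" using assms(1,2) by (simp add: algebra_simps)
  then show "e1 = e2" using assms(3) by simp
  then show "c1 = c2" using assms(1) by simp
qed

section \<open>Reflections and translations of realized sets\<close>

lemma realizes_union_reflection:
  assumes I: "ideal_fms C" and R: "C \<subseteq> age (UNIV :: real set) dR" and am: "amalg2 C"
    and W: "realizes C dR W" and pq: "p \<in> W" "q \<in> W" "p \<noteq> q"
  shows "realizes C dR (W \<union> (\<lambda>x. p + q - x) ` W)"
proof -
  let ?\<rho> = "\<lambda>x. p + q - x"
  have "(\<lambda>x. -1 * x + (p + q)) = ?\<rho>" by auto
  then have \<rho>W: "realizes C dR (?\<rho> ` W)" using realizes_motion_image[OF W, of "-1" "p + q"] by simp
  have "p = ?\<rho> q" "q = ?\<rho> p" by simp_all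
  then have P: "{p, q} \<subseteq> W \<inter> ?\<rho> ` W" using pq(1,2) by blast
  have "card {p, q} \<le> 2" by (simp add: card_insert_if)
  then obtain W3 e1 c1 e2 c2 where W3: "realizes C dR W3" "e1 = 1 \<or> e1 = -1" "e2 = 1 \<or> e2 = -1"
      "(\<lambda>x. e1 * x + c1) ` W \<subseteq> W3" "(\<lambda>x. e2 * x + c2) ` ?\<rho> ` W \<subseteq> W3"
      and agree: "\<And>z. z \<in> {p, q} \<Longrightarrow> e1 * z + c1 = e2 * z + c2"
    by (rule realizes_amalgamation[OF I R am W \<rho>W P]) (rule that)
  have "e1 * p + c1 = e2 * p + c2" "e1 * q + c1 = e2 * q + c2" using agree by simp_all
  then have "e1 = e2" "c1 = c2" using motions_eq_if_agree_on_two_points pq(3) by blast+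
  then have "(\<lambda>x. e1 * x + c1) ` (W \<union> ?\<rho> ` W) \<subseteq> W3" using W3(4,5) by auto
  then show ?thesis using realizes_if_motion_into[OF I W3(1,2)] by blast
qed

text \<open>Translation by q - p is the composite of the reflections in (p + r) / 2 and (q + r) / 2,
  for a third point r.\<close>
lemma realizes_union_shift:
  assumes I: "ideal_fms C" and R: "C \<subseteq> age (UNIV :: real set) dR" and am: "amalg2 C"
    and W: "realizes C dR W" "3 \<le> card W" and pq: "p \<in> W" "q \<in> W"
  shows "realizes C dR (W \<union> (\<lambda>x. x + (q - p)) ` W)"
proof -
  have "\<not> W \<subseteq> {p, q}"
  proof
    assume "W \<subseteq> {p, q}"
    then have "card W \<le> card {p, q}" by (rule card_mono[rotated]) simp
    also have "\<dots> \<le> 2" by (simp add: card_insert_if)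
    finally show False using W(2) by simp
  qed
  then obtain r where r: "r \<in> W" "r \<noteq> p" "r \<noteq> q" by blast
  define W1 where "W1 = W \<union> (\<lambda>x. p + r - x) ` W"
  have W1: "realizes C dR W1"
    unfolding W1_def using realizes_union_reflection[OF I R am W(1) pq(1) r(1)] r(2) by simp
  have "q \<in> W1" "r \<in> W1" using pq r unfolding W1_def by auto
  then have W2: "realizes C dR (W1 \<union> (\<lambda>x. q + r - x) ` W1)"
    using realizes_union_reflection[OF I R am W1] r(3) by simp
  have "w + (q - p) \<in> (\<lambda>x. q + r - x) ` W1" if "w \<in> W" for w
  proof -
    have "p + r - w \<in> W1" using that unfolding W1_def by blast
    then show ?thesis by (rule rev_image_eqI) simp
  qed
  then have "W \<union> (\<lambda>x. x + (q - p)) ` W \<subseteq> W1 \<union> (\<lambda>x. q + r - x) ` W1"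
    unfolding W1_def by blast
  then show ?thesis by (rule realizes_subset[OF I W2])
qed

lemma realizes_union_translate:
  assumes I: "ideal_fms C" and R: "C \<subseteq> age (UNIV :: real set) dR" and am: "amalg2 C"
    and W: "realizes C dR W" "3 \<le> card W" and V: "realizes C dR V" "a \<in> V" "b \<in> V"
  shows "realizes C dR (W \<union> (\<lambda>x. x + (b - a)) ` W)"
proof -
  obtain W3 e1 c1 e2 c2 where W3: "realizes C dR W3" "e1 = 1 \<or> e1 = -1" "e2 = 1 \<or> e2 = -1"
      "(\<lambda>x. e1 * x + c1) ` W \<subseteq> W3" "(\<lambda>x. e2 * x + c2) ` V \<subseteq> W3"
    by (rule realizes_amalgamation[OF I R am W(1) V(1), of "{}"]) simp_all
  have "inj_on (\<lambda>x. e1 * x + c1) W" using W3(2) by (auto simp: inj_on_def)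
  then have "card W \<le> card W3"
    using card_mono[OF _ W3(4)] W3(1) card_image unfolding realizes_def by metis
  then have card3: "3 \<le> card W3" using W(2) by simp
  obtain p q where pq: "p \<in> W3" "q \<in> W3" "q - p = e1 * (b - a)"
  proof (cases "e2 = e1")
    case True
    then show thesis using that[of "e2 * a + c2" "e2 * b + c2"] W3(5) V(2,3) by (auto simp: algebra_simps)
  next
    case False
    then have "e2 = - e1" using W3(2,3) by auto
    then show thesis using that[of "e2 * b + c2" "e2 * a + c2"] W3(5) V(2,3) by (auto simp: algebra_simps)
  qed
  have W4: "realizes C dR (W3 \<union> (\<lambda>x. x + (q - p)) ` W3)"
    by (rule realizes_union_shift[OF I R am W3(1) card3 pq(1,2)])
  have "e1 * (x + (b - a)) + c1 = (e1 * x + c1) + (q - p)" for x using pq(3) by (simp add: algebra_simps)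
  then have "(\<lambda>x. e1 * x + c1) ` (W \<union> (\<lambda>x. x + (b - a)) ` W) \<subseteq> W3 \<union> (\<lambda>x. x + (q - p)) ` W3"
    using W3(4) by auto
  then show ?thesis by (rule realizes_if_motion_into[OF I W4 W3(2)])
qed

section \<open>Ideals without three-point spaces\<close>

lemma homogeneous_if_card_le_2:
  assumes D: "metric_on D e" "finite D" "card D \<le> 2"
  shows "homogeneous D e"
  unfolding homogeneous_def
proof (intro conjI allI impI)
  show "metric_on D e" by (rule D(1))
  fix S T h assume "S \<subseteq> D \<and> T \<subseteq> D \<and> finite S \<and> finite T \<and> isometry h S e T e"
  then have S: "S \<subseteq> D" and T: "T \<subseteq> D" and h: "isometry h S e T e" by auto
  show "\<exists>g. isometry g D e D e \<and> (\<forall>x\<in>S. g x = h x)"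
  proof (cases "\<forall>x\<in>S. h x = x")
    case True
    have "isometry id D e D e" by (simp add: isometry_def)
    then show ?thesis using True by auto
  next
    case False
    then obtain a where a: "a \<in> S" "h a \<noteq> a" by blast
    define b where "b = h a"
    have ab: "a \<in> D" "b \<in> D" using a(1) S T isometry_image[OF h] unfolding b_def by blast+
    have "card {a, b} = 2" using a(2) unfolding b_def by simp
    then have "card {a, b} = card D" using card_mono[OF D(2)] ab D(3) by (metis empty_subsetI insert_subset order_antisym)
    then have Dab: "D = {a, b}" using card_subset_eq[OF D(2)] ab by (metis empty_subsetI insert_subset)
    define g where "g x = (if x = a then b else a)" for x
    have "e a a = 0" "e b b = 0" "e a b = e b a"
      using metric_on_zero_iff[OF D(1)] metric_on_sym[OF D(1)] ab by simp_all
    then have "\<forall>x\<in>D. \<forall>y\<in>D. e (g x) (g y) = e x y" unfolding Dab g_def by auto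
    moreover have "bij_betw g D D" using a(2) unfolding Dab g_def b_def bij_betw_def inj_on_def by auto
    ultimately have "isometry g D e D e" unfolding isometry_def by blast
    moreover have "g x = h x" if x: "x \<in> S" for x
    proof (cases "x = a")
      case True
      then show ?thesis unfolding g_def b_def by simp
    next
      case False
      have "inj_on h S" using h unfolding isometry_def by (blast intro: bij_betw_imp_inj_on)
      then have "h x \<noteq> b" using False x a(1) unfolding b_def by (simp add: inj_on_eq_iff)
      moreover have "h x \<in> D" using isometry_image[OF h] x T by blast
      ultimately show ?thesis using False unfolding Dab g_def by simp
    qed
    ultimately show ?thesis by blast
  qed
qed

lemma card_le_2_if_no_three_point_space:
  assumes I: "ideal_fms C" and no3: "\<not> (\<exists>X\<in>C. card (fst X) = 3)" and X: "X \<in> C"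
  shows "card (fst X) \<le> 2"
proof (rule ccontr)
  assume "\<not> card (fst X) \<le> 2"
  then have "3 \<le> card (fst X)" by simp
  then obtain N where N: "N \<subseteq> fst X" "card N = 3" using obtain_subset_with_card_n by metis
  have "(N, snd X) \<in> C" by (rule ideal_fms_restrict[OF I X N(1)])
  moreover have "card (fst (N, snd X)) = 3" using N(2) by simp
  ultimately show False using no3 by blast
qed

text \<open>Amalgamating a copy of a member of C with a realized set of maximal size cannot enlarge
  the latter, so the copy is moved into it.\<close>
lemma subset_age_if_maximal_realization:
  assumes I: "ideal_fms C" and R: "C \<subseteq> age (UNIV :: real set) dR" and am: "amalg2 C"
    and Wm: "realizes C dR Wm" and max: "\<And>W. realizes C dR W \<Longrightarrow> card W \<le> card Wm"
  shows "C \<subseteq> age Wm dR"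
proof
  fix X assume X: "X \<in> C"
  obtain W f where W: "realizes C dR W" "isometry f (fst X) (snd X) W dR"
    by (rule realizes_if_mem_age[OF R X])
  obtain W3 e1 c1 e2 c2 where W3: "realizes C dR W3" "e1 = 1 \<or> e1 = -1" "e2 = 1 \<or> e2 = -1"
      "(\<lambda>x. e1 * x + c1) ` W \<subseteq> W3" "(\<lambda>x. e2 * x + c2) ` Wm \<subseteq> W3"
    by (rule realizes_amalgamation[OF I R am W(1) Wm, of "{}"]) simp_all
  have "finite W3" using W3(1) by (simp add: realizes_def)
  have "inj_on (\<lambda>x. e2 * x + c2) Wm" using W3(3) by (auto simp: inj_on_def)
  then have "card ((\<lambda>x. e2 * x + c2) ` Wm) = card Wm" by (rule card_image)
  also have "\<dots> \<ge> card W3" by (rule max[OF W3(1)])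
  finally have "card ((\<lambda>x. e2 * x + c2) ` Wm) = card W3"
    using card_mono[OF \<open>finite W3\<close> W3(5)] by linarith
  then have onto: "(\<lambda>x. e2 * x + c2) ` Wm = W3" by (rule card_subset_eq[OF \<open>finite W3\<close> W3(5)])
  have "(e2 * e1) * w + e2 * (c1 - c2) \<in> Wm" if w: "w \<in> W" for w
  proof -
    have "e1 * w + c1 \<in> (\<lambda>x. e2 * x + c2) ` Wm" using W3(4) w onto by blast
    then obtain m where m: "m \<in> Wm" "e1 * w + c1 = e2 * m + c2" by blast
    have "(e2 * e1) * w + e2 * (c1 - c2) = e2 * ((e1 * w + c1) - c2)" by (simp add: algebra_simps)
    also have "\<dots> = e2 * (e2 * m)" using m(2) by simp
    also have "\<dots> = m" using W3(3) by auto
    finally show ?thesis using m(1) by simp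
  qed
  then have "(\<lambda>x. (e2 * e1) * x + e2 * (c1 - c2)) ` W \<subseteq> Wm" by blast
  moreover have "e2 * e1 = 1 \<or> e2 * e1 = -1" using W3(2,3) by auto
  ultimately show "X \<in> age Wm dR"
    by (intro mem_age_if_motion_into[OF ideal_fms_fin_mspace[OF I X] W(2)])
qed

lemma homogeneous_realization_if_card_le_2:
  assumes I: "ideal_fms C" and R: "C \<subseteq> age (UNIV :: real set) dR" and am: "amalg2 C"
    and le2: "\<And>X. X \<in> C \<Longrightarrow> card (fst X) \<le> 2"
  shows "\<exists>D :: real set. homogeneous D dR \<and> age D dR = C"
proof -
  have card_le: "card W < 3" if W: "realizes C dR W" for W
  proof -
    obtain X f where X: "X \<in> C" "isometry f (fst X) (snd X) W dR"
      using W unfolding realizes_def by blast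
    then show ?thesis using le2[OF X(1)] isometry_card_eq[OF X(2)] by simp
  qed
  obtain X where "X \<in> C" using I unfolding ideal_fms_def by blast
  then obtain W f where W: "realizes C dR W" "isometry f (fst X) (snd X) W dR"
    by (rule realizes_if_mem_age[OF R])
  have "\<forall>W. realizes C dR W \<longrightarrow> card W < 3" using card_le by blast
  with W(1) have "\<exists>Wm. realizes C dR Wm \<and> (\<forall>W. realizes C dR W \<longrightarrow> card W \<le> card Wm)"
    by (rule Lattices_Big.ex_has_greatest_nat)
  then obtain Wm where Wm: "realizes C dR Wm"
    and max: "\<And>W. realizes C dR W \<Longrightarrow> card W \<le> card Wm" by blast
  have "age Wm dR \<subseteq> C"
    by (rule age_subset_if_finite_subsets_realize[OF I]) (rule realizes_subset[OF I Wm])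
  moreover have "C \<subseteq> age Wm dR" by (rule subset_age_if_maximal_realization[OF I R am Wm max])
  moreover have "finite Wm" using Wm by (simp add: realizes_def)
  then have "homogeneous Wm dR"
    using homogeneous_if_card_le_2[OF metric_on_dR] card_le[OF Wm] by simp
  ultimately show ?thesis by blast
qed

section \<open>The group of admissible translations\<close>

text \<open>Only sets of at least three points are required to admit the translation: the
  two-reflection argument of realizes_union_shift needs a third point.\<close>
definition admissible_translations :: "fms set \<Rightarrow> real set" where
  "admissible_translations C = {t. \<forall>W. realizes C dR W \<and> 3 \<le> card W
     \<longrightarrow> realizes C dR (W \<union> (\<lambda>x. x + t) ` W)}"

lemma admissible_translationsD:
  "t \<in> admissible_translations C \<Longrightarrow> realizes C dR W \<Longrightarrow> 3 \<le> card W
    \<Longrightarrow> realizes C dR (W \<union> (\<lambda>x. x + t) ` W)"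
  unfolding admissible_translations_def by blast

lemma additive_subgroup_admissible_translations:
  assumes I: "ideal_fms C"
  shows "additive_subgroup (admissible_translations C)"
  unfolding additive_subgroup_def
proof (intro conjI ballI)
  show "0 \<in> admissible_translations C" unfolding admissible_translations_def by simp
next
  fix s t assume s: "s \<in> admissible_translations C" and t: "t \<in> admissible_translations C"
  show "s + t \<in> admissible_translations C" unfolding admissible_translations_def
  proof (intro CollectI allI impI, elim conjE)
    fix W assume W: "realizes C dR W" "3 \<le> card W"
    define W1 where "W1 = W \<union> (\<lambda>x. x + s) ` W"
    have W1: "realizes C dR W1" using admissible_translationsD[OF s W] by (simp add: W1_def)
    then have "card W \<le> card W1" unfolding W1_def realizes_def by (simp add: card_mono)
    then have "3 \<le> card W1" using W(2) by simp
    then have "realizes C dR (W1 \<union> (\<lambda>x. x + t) ` W1)"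
      by (rule admissible_translationsD[OF t W1])
    moreover have "x + (s + t) = (x + s) + t" for x by simp
    then have "W \<union> (\<lambda>x. x + (s + t)) ` W \<subseteq> W1 \<union> (\<lambda>x. x + t) ` W1" unfolding W1_def by auto
    ultimately show "realizes C dR (W \<union> (\<lambda>x. x + (s + t)) ` W)" by (rule realizes_subset[OF I])
  qed
next
  fix t assume t: "t \<in> admissible_translations C"
  show "- t \<in> admissible_translations C" unfolding admissible_translations_def
  proof (intro CollectI allI impI, elim conjE)
    fix W assume W: "realizes C dR W" "3 \<le> card W"
    define W' where "W' = (\<lambda>x. 1 * x + - t) ` W"
    have "realizes C dR W'" unfolding W'_def by (rule realizes_motion_image[OF W(1)]) simp
    moreover have "card W' = card W" unfolding W'_def by (simp add: card_image)
    ultimately have "realizes C dR (W' \<union> (\<lambda>x. x + t) ` W')"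
      using admissible_translationsD[OF t] W(2) by simp
    moreover have "w \<in> (\<lambda>x. x + t) ` W'" if "w \<in> W" for w
      using that unfolding W'_def by (auto intro: rev_image_eqI[of "w - t"])
    then have "W \<union> (\<lambda>x. x + - t) ` W \<subseteq> W' \<union> (\<lambda>x. x + t) ` W'" unfolding W'_def by auto
    ultimately show "realizes C dR (W \<union> (\<lambda>x. x + - t) ` W)" by (rule realizes_subset[OF I])
  qed
qed

lemma realizes_finite_subset_admissible_translations:
  assumes I: "ideal_fms C" and W0: "realizes C dR W0" "3 \<le> card W0"
    and S: "finite S" "S \<subseteq> admissible_translations C"
  shows "realizes C dR S"
proof -
  have U0: "realizes C dR (\<Union>t\<in>insert 0 S. (\<lambda>x. x + t) ` W0)"
    using S
  proof (induction S rule: finite_induct)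
    case empty
    then show ?case using W0(1) by simp
  next
    case (insert t S)
    define U where "U = (\<Union>t\<in>insert 0 S. (\<lambda>x. x + t) ` W0)"
    have U: "realizes C dR U" using insert unfolding U_def by simp
    have W0U: "W0 \<subseteq> U" unfolding U_def by force
    then have "card W0 \<le> card U" using U card_mono unfolding realizes_def by blast
    then have UU: "realizes C dR (U \<union> (\<lambda>x. x + t) ` U)"
      using admissible_translationsD[OF _ U] insert.prems W0(2) by simp
    have eq: "(\<Union>s\<in>insert 0 (insert t S). (\<lambda>x. x + s) ` W0) = (\<lambda>x. x + t) ` W0 \<union> U"
      unfolding U_def by auto
    have "(\<lambda>x. x + t) ` W0 \<subseteq> (\<lambda>x. x + t) ` U" using W0U by (rule image_mono)
    then have "(\<Union>s\<in>insert 0 (insert t S). (\<lambda>x. x + s) ` W0) \<subseteq> U \<union> (\<lambda>x. x + t) ` U"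
      unfolding eq by blast
    with UU show ?case by (rule realizes_subset[OF I])
  qed
  obtain w0 where "w0 \<in> W0" using W0(2) by fastforce
  then have "(\<lambda>x. 1 * x + w0) ` S \<subseteq> (\<Union>t\<in>insert 0 S. (\<lambda>x. x + t) ` W0)"
    by (auto simp: add.commute)
  then show ?thesis by (rule realizes_if_motion_into[OF I U0, rotated]) simp
qed

lemma age_admissible_translations:
  assumes I: "ideal_fms C" and R: "C \<subseteq> age (UNIV :: real set) dR" and am: "amalg2 C"
    and W0: "realizes C dR W0" "3 \<le> card W0"
  shows "age (admissible_translations C) dR = C"
proof
  show "age (admissible_translations C) dR \<subseteq> C"
    using realizes_finite_subset_admissible_translations[OF I W0]
    by (rule age_subset_if_finite_subsets_realize[OF I])
next
  show "C \<subseteq> age (admissible_translations C) dR"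
  proof
    fix X assume X: "X \<in> C"
    then obtain W f where W: "realizes C dR W" "isometry f (fst X) (snd X) W dR"
      by (rule realizes_if_mem_age[OF R])
    have diff: "b - a \<in> admissible_translations C" if "a \<in> W" "b \<in> W" for a b
      unfolding admissible_translations_def
      by (auto intro: realizes_union_translate[OF I R am _ _ W(1) that])
    obtain c where "(\<lambda>x. 1 * x + c) ` W \<subseteq> admissible_translations C"
    proof (cases "W = {}")
      case True
      then show thesis using that[of 0] by simp
    next
      case False
      then obtain a where a: "a \<in> W" by blast
      have "(\<lambda>x. 1 * x + - a) ` W \<subseteq> admissible_translations C" using diff[OF a] by auto
      then show thesis by (rule that)
    qed
    then show "X \<in> age (admissible_translations C) dR"
      by (rule mem_age_if_motion_into[OF ideal_fms_fin_mspace[OF I X] W(2), rotated]) simp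
  qed
qed

lemma isometry_motion_additive_subgroup:
  assumes G: "additive_subgroup G" and e: "e = 1 \<or> e = -1" and c: "c \<in> G"
  shows "isometry (\<lambda>x. e * x + c) G dR G dR"
proof -
  have add: "x + y \<in> G" and neg: "- x \<in> G" if "x \<in> G" "y \<in> G" for x y
    using G that unfolding additive_subgroup_def by auto
  have mul: "e * x \<in> G" if "x \<in> G" for x using e neg[OF that that] that by auto
  have "G \<subseteq> (\<lambda>x. e * x + c) ` G"
  proof
    fix y assume "y \<in> G"
    then have "e * (y + - c) \<in> G" using mul add neg c by blast
    moreover have "y = e * (e * (y + - c)) + c" using e by auto
    ultimately show "y \<in> (\<lambda>x. e * x + c) ` G" by (rule rev_image_eqI)
  qed
  moreover have "(\<lambda>x. e * x + c) ` G \<subseteq> G" using mul add c by blast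
  moreover have "inj_on (\<lambda>x. e * x + c) G" using e by (auto simp: inj_on_def)
  moreover have "dR (e * x + c) (e * y + c) = dR x y" for x y
    using e unfolding dR_def by (auto simp: abs_minus_commute)
  ultimately show ?thesis unfolding isometry_def bij_betw_def by auto
qed

lemma homogeneous_additive_subgroup:
  assumes G: "additive_subgroup G"
  shows "homogeneous G dR"
  unfolding homogeneous_def
proof (intro conjI allI impI)
  show "metric_on G dR" by (rule metric_on_dR)
  fix S T h assume "S \<subseteq> G \<and> T \<subseteq> G \<and> finite S \<and> finite T \<and> isometry h S dR T dR"
  then have S: "S \<subseteq> G" and T: "T \<subseteq> G" and h: "isometry h S dR T dR" by auto
  have "\<forall>x\<in>S. \<forall>y\<in>S. dR (h x) (h y) = dR x y" using h unfolding isometry_def by blast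
  then obtain e c where e: "e = 1 \<or> e = -1" and hS: "\<And>x. x \<in> S \<Longrightarrow> h x = e * x + c"
    by (rule dist_preserving_real_affine) (rule that)
  obtain c' where "c' \<in> G" "\<And>x. x \<in> S \<Longrightarrow> h x = e * x + c'"
  proof (cases "S = {}")
    case True
    then show thesis using that[of 0] G unfolding additive_subgroup_def by simp
  next
    case False
    then obtain s where s: "s \<in> S" by blast
    then have "h s \<in> G" "- (e * s) \<in> G"
      using isometry_image[OF h] S T G e unfolding additive_subgroup_def by auto
    then have "h s + - (e * s) \<in> G" using G unfolding additive_subgroup_def by blast
    moreover have "h s + - (e * s) = c" using hS[OF s] by simp
    ultimately show thesis using that hS by blast
  qed
  then show "\<exists>g. isometry g G dR G dR \<and> (\<forall>x\<in>S. g x = h x)"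
    using isometry_motion_additive_subgroup[OF G e] by metis
qed

lemma additive_subgroup_realization:
  assumes I: "ideal_fms C" and R: "C \<subseteq> age (UNIV :: real set) dR" and am: "amalg2 C"
    and X: "X \<in> C" "card (fst X) = 3"
  shows "\<exists>G. additive_subgroup G \<and> homogeneous G dR \<and> age G dR = C"
proof -
  obtain W0 f where W0: "realizes C dR W0" "isometry f (fst X) (snd X) W0 dR"
    by (rule realizes_if_mem_age[OF R X(1)])
  then have "3 \<le> card W0" using isometry_card_eq[OF W0(2)] X(2) by simp
  then have "age (admissible_translations C) dR = C" by (rule age_admissible_translations[OF I R am W0(1)])
  moreover have "additive_subgroup (admissible_translations C)"
    by (rule additive_subgroup_admissible_translations[OF I])
  ultimately show ?thesis using homogeneous_additive_subgroup by blast
qed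

theorem lemma4:
  fixes C :: "fms set"
  assumes "ideal_fms C" and "C \<subseteq> age (UNIV :: real set) dR"
  shows "(\<forall>(D :: 'a set) e. homogeneous D e \<and> age D e = C \<longrightarrow> amalg2 C)
       \<and> (amalg2 C \<longrightarrow> (\<exists>(D :: real set) e. homogeneous D e \<and> age D e = C))
       \<and> (amalg2 C \<and> (\<exists>X\<in>C. card (fst X) = 3) \<longrightarrow>
            (\<exists>G. additive_subgroup G \<and> homogeneous G dR \<and> age G dR = C))"
proof -
  have group: "\<exists>G. additive_subgroup G \<and> homogeneous G dR \<and> age G dR = C"
    if "amalg2 C" "\<exists>X\<in>C. card (fst X) = 3"
    using additive_subgroup_realization[OF assms] that by blast
  have "\<exists>(D :: real set) e. homogeneous D e \<and> age D e = C" if am: "amalg2 C"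
  proof (cases "\<exists>X\<in>C. card (fst X) = 3")
    case True
    then show ?thesis using group[OF am] by blast
  next
    case False
    then show ?thesis
      using homogeneous_realization_if_card_le_2[OF assms am]
        card_le_2_if_no_three_point_space[OF assms(1)] by blast
  qed
  moreover have "amalg2 C" if "homogeneous D e" "age D e = C" for D :: "'a set" and e
    using amalg2_age_if_homogeneous[OF that(1)] that(2) by simp
  ultimately show ?thesis using group by blast
qed

end
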